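(* Let $0<z_0<1$, $t>0$ and $r=e^t$. Then: (1) the largest $s>0$ with $B_\rho(z_0,s)\subset B_h(z_0,t)$ is $s=t$; (2) the smallest $s>0$ with $B_h(z_0,t)\subset B_\rho(z_0,s)$ is the number $s$ satisfying $$\operatorname{th}\frac{s}{2}=\frac{r-1}{\sqrt{(r+1)^2-4rz_0^2}}.$$
   Context: $\mathbb{B}^2$ is the open unit disk in $\mathbb{C}$. The hyperbolic metric is given by $\operatorname{sh}\frac{\rho_{\mathbb{B}^2}(x,y)}{2}=\frac{|x-y|}{\sqrt{(1-|x|^2)(1-|y|^2)}}$, and $B_\rho(z_0,s)=\{z\in\mathbb{B}^2:\rho_{\mathbb{B}^2}(z_0,z)<s\}$. For distinct $x,y\in\mathbb{B}^2$ the Hilbert metric is $h_{\mathbb{B}^2}(x,y)=\log\frac{|u-y||x-v|}{|u-x||y-v|}$, where $u,v$ are the intersection points of the line through $x,y$ with the unit circle, labelled so that $|u-x|<|u-y|$; $h_{\mathbb{B}^2}(x,x)=0$; and $B_h(z_0,t)=\{z\in\mathbb{B}^2:h_{\mathbb{B}^2}(z_0,z)<t\}$. *)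

theory Defs
  imports "HOL-Analysis.Analysis"
begin

definition unit_disk :: "complex set" where
  "unit_disk = {z. norm z < 1}"

definition hyp_rho :: "complex \<Rightarrow> complex \<Rightarrow> real" where
  "hyp_rho x y = 2 * arsinh (norm (x - y) / sqrt ((1 - (norm x)\<^sup>2) * (1 - (norm y)\<^sup>2)))"

definition chord_u :: "complex \<Rightarrow> complex \<Rightarrow> complex" where
  "chord_u x y = (THE u. norm u = 1 \<and> (\<exists>a::real. u = x + of_real a * (y - x))
                      \<and> norm (u - x) < norm (u - y))"

definition chord_v :: "complex \<Rightarrow> complex \<Rightarrow> complex" where
  "chord_v x y = (THE v. norm v = 1 \<and> (\<exists>a::real. v = x + of_real a * (y - x))
                      \<and> v \<noteq> chord_u x y)"

definition hilbert_h :: "complex \<Rightarrow> complex \<Rightarrow> real" where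
  "hilbert_h x y = (if x = y then 0 else
     (let u = chord_u x y; v = chord_v x y in
       ln ((norm (u - y) * norm (x - v)) / (norm (u - x) * norm (y - v)))))"

definition ball_rho :: "complex \<Rightarrow> real \<Rightarrow> complex set" where
  "ball_rho z0 s = {z \<in> unit_disk. hyp_rho z0 z < s}"

definition ball_h :: "complex \<Rightarrow> real \<Rightarrow> complex set" where
  "ball_h z0 t = {z \<in> unit_disk. hilbert_h z0 z < t}"

definition is_greatest :: "real set \<Rightarrow> real \<Rightarrow> bool" where
  "is_greatest S x \<longleftrightarrow> x \<in> S \<and> (\<forall>y\<in>S. y \<le> x)"

definition is_least :: "real set \<Rightarrow> real \<Rightarrow> bool" where
  "is_least S x \<longleftrightarrow> x \<in> S \<and> (\<forall>y\<in>S. x \<le> y)"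


end

theory Submission
  imports Defs
begin

(* Write w = 1 - x * cnj y and N = (1 - |x|^2) (1 - |y|^2). Then cosh^2 (rho/2) = |w|^2 / N, and
   computing the cross ratio from the two parameters at which the line x + a (y - x) meets the unit
   circle gives cosh^2 (h/2) = (Re w)^2 / N. Hence h <= rho, with equality on the diameter through x,
   and (1 - |x|^2) cosh^2 (rho/2) + |x|^2 <= cosh^2 (h/2), with equality when Re (x cnj y) = |x|^2,
   i.e. on the chord through x perpendicular to that diameter. Both inclusions of balls and their
   sharpness are read off from these two inequalities and their equality cases. *)

lemma line_meets_unit_circle:
  fixes x y :: complex
  assumes x: "cmod x < 1" and y: "cmod y < 1" and xy: "x \<noteq> y"
  obtains a1 a2 :: real where "a1 < 0" "1 < a2"
    "\<And>a. (cmod (x + of_real a * (y - x)))\<^sup>2 - 1 = (cmod (y - x))\<^sup>2 * (a - a1) * (a - a2)"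
proof -
  define m where "m = (cmod (y - x))\<^sup>2"
  define b where "b = Re (x * cnj (y - x))"
  define c where "c = (cmod x)\<^sup>2 - 1"
  have m: "m > 0" using xy by (simp add: m_def)
  have c: "c < 0" using x by (simp add: c_def abs_square_less_1)
  have mc: "m * c < 0" using m c by (rule mult_pos_neg)
  have expand: "(cmod (x + of_real a * (y - x)))\<^sup>2 - 1 = m * a\<^sup>2 + 2 * b * a + c" for a
    unfolding m_def b_def c_def cmod_power2 by (simp add: power2_eq_square algebra_simps)
  define D where "D = sqrt (b\<^sup>2 - m * c)"
  have D2: "D\<^sup>2 = b\<^sup>2 - m * c" unfolding D_def
    using mc zero_le_power2[of b] by (intro real_sqrt_pow2) linarith
  define a1 where "a1 = (- b - D) / m"
  define a2 where "a2 = (- b + D) / m"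
  have factor: "m * a\<^sup>2 + 2 * b * a + c = m * (a - a1) * (a - a2)" for a
  proof -
    have "m * (a - a1) * (a - a2) = m * a\<^sup>2 + 2 * b * a + (b\<^sup>2 - D\<^sup>2) / m"
      unfolding a1_def a2_def using m by (simp add: field_simps power2_eq_square)
    then show ?thesis unfolding D2 using m by simp
  qed
  have circle: "(cmod (x + of_real a * (y - x)))\<^sup>2 - 1 = m * (a - a1) * (a - a2)" for a
    using expand factor by simp
  have "\<bar>b\<bar> < D" unfolding D_def using mc by (intro real_less_rsqrt) simp
  then have a12: "a1 < a2" unfolding a1_def a2_def using m by (simp add: divide_strict_right_mono)
  have "m * (0 - a1) * (0 - a2) < 0" using circle[of 0] expand[of 0] c by simp
  then have a1: "a1 < 0" using m a12 by (auto simp: mult_less_0_iff zero_less_mult_iff)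
  have "(cmod y)\<^sup>2 < 1" using y by (simp add: abs_square_less_1)
  then have "m * (1 - a1) * (1 - a2) < 0" using circle[of 1] by simp
  then have "1 < a2" using m a12 by (auto simp: mult_less_0_iff zero_less_mult_iff)
  then show thesis using a1 that circle unfolding m_def by blast
qed

lemma hilbert_h_by_chord_params:
  fixes x y :: complex
  assumes xy: "x \<noteq> y" and a1: "a1 < 0" and a2: "1 < a2"
    and circle: "\<And>a. (cmod (x + of_real a * (y - x)))\<^sup>2 - 1 = (cmod (y - x))\<^sup>2 * (a - a1) * (a - a2)"
  shows "hilbert_h x y = ln ((1 - a1) * a2 / (- a1 * (a2 - 1)))"
proof -
  define d where "d = y - x"
  have d: "cmod d > 0" using xy by (simp add: d_def)
  have on_circle: "cmod (x + of_real a * d) = 1 \<longleftrightarrow> a = a1 \<or> a = a2" for a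
  proof -
    have "cmod (x + of_real a * d) = 1 \<longleftrightarrow> (cmod (x + of_real a * d))\<^sup>2 - 1 = 0"
      using norm_ge_zero[of "x + of_real a * d"] by (smt (verit) power2_eq_1_iff)
    then show ?thesis using circle[of a] d by (simp add: d_def)
  qed
  have dist_x: "cmod (x + of_real a * d - x) = \<bar>a\<bar> * cmod d" for a
    by (simp add: norm_mult)
  have dist_y: "cmod (x + of_real a * d - y) = \<bar>a - 1\<bar> * cmod d" for a
  proof -
    have "x + of_real a * d - y = of_real (a - 1) * d" by (simp add: d_def algebra_simps)
    then show ?thesis by (simp only: norm_mult norm_of_real)
  qed
  define u where "u = x + of_real a1 * d"
  define v where "v = x + of_real a2 * d"
  have u_x: "cmod (u - x) = - a1 * cmod d" and u_y: "cmod (u - y) = (1 - a1) * cmod d"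
    and v_x: "cmod (v - x) = a2 * cmod d" and v_y: "cmod (v - y) = (a2 - 1) * cmod d"
    using dist_x[of a1] dist_y[of a1] dist_x[of a2] dist_y[of a2] a1 a2
    unfolding u_def v_def by simp_all
  have u_closer: "cmod (u - x) < cmod (u - y)"
    unfolding u_x u_y using d by (simp add: left_diff_distrib)
  have on_line: "(\<exists>a::real. w = x + of_real a * (y - x)) \<longleftrightarrow> (\<exists>a::real. w = x + of_real a * d)" for w
    by (simp add: d_def)
  have u: "chord_u x y = u" unfolding chord_u_def on_line
  proof (rule the_equality)
    show "cmod u = 1 \<and> (\<exists>a::real. u = x + of_real a * d) \<and> cmod (u - x) < cmod (u - y)"
      using on_circle[of a1] u_closer unfolding u_def by auto
  next
    fix w assume w: "cmod w = 1 \<and> (\<exists>a::real. w = x + of_real a * d) \<and> cmod (w - x) < cmod (w - y)"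
    then obtain a where a: "w = x + of_real a * d" by blast
    then have "a = a1 \<or> a = a2" using on_circle w by blast
    moreover have "w \<noteq> v" using w v_x v_y d by auto
    ultimately show "w = u" unfolding a u_def v_def by blast
  qed
  have v: "chord_v x y = v" unfolding chord_v_def on_line u
  proof (rule the_equality)
    show "cmod v = 1 \<and> (\<exists>a::real. v = x + of_real a * d) \<and> v \<noteq> u"
      using on_circle[of a2] a1 a2 d unfolding u_def v_def by auto
  next
    fix w assume w: "cmod w = 1 \<and> (\<exists>a::real. w = x + of_real a * d) \<and> w \<noteq> u"
    then obtain a where a: "w = x + of_real a * d" by blast
    then have "a = a1 \<or> a = a2" using on_circle w by blast
    then show "w = v" using a w unfolding u_def v_def by blast
  qed
  show ?thesis unfolding hilbert_h_def using xy u_x u_y v_x v_y d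
    by (simp add: Let_def u v norm_minus_commute)
qed

lemma hilbert_h_nonneg:
  assumes "cmod x < 1" "cmod y < 1"
  shows "0 \<le> hilbert_h x y"
proof (cases "x = y")
  case True
  then show ?thesis by (simp add: hilbert_h_def)
next
  case False
  obtain a1 a2 where a: "a1 < 0" "1 < a2"
    and circle: "\<And>a. (cmod (x + of_real a * (y - x)))\<^sup>2 - 1 = (cmod (y - x))\<^sup>2 * (a - a1) * (a - a2)"
    using line_meets_unit_circle[OF assms False] by blast
  have "1 \<le> (1 - a1) * a2 / (- a1 * (a2 - 1))" using a by (simp add: field_simps)
  then show ?thesis by (simp add: hilbert_h_by_chord_params[OF False a circle])
qed

lemma cosh_half_hilbert_h_sq:
  assumes x: "cmod x < 1" and y: "cmod y < 1"
  shows "(cosh (hilbert_h x y / 2))\<^sup>2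
    = (Re (1 - x * cnj y))\<^sup>2 / ((1 - (cmod x)\<^sup>2) * (1 - (cmod y)\<^sup>2))"
proof (cases "x = y")
  case True
  have "(Re y)\<^sup>2 + (Im y)\<^sup>2 < 1" using y unfolding cmod_power2[symmetric] by (simp add: abs_square_less_1)
  then show ?thesis unfolding True cmod_power2 by (simp add: hilbert_h_def power2_eq_square)
next
  case False
  obtain a1 a2 where a: "a1 < 0" "1 < a2"
    and circle: "\<And>a. (cmod (x + of_real a * (y - x)))\<^sup>2 - 1 = (cmod (y - x))\<^sup>2 * (a - a1) * (a - a2)"
    using line_meets_unit_circle[OF x y False] by blast
  define m where "m = (cmod (y - x))\<^sup>2"
  have m: "m > 0" using False by (simp add: m_def)
  have Nx: "1 - (cmod x)\<^sup>2 = - m * a1 * a2" using circle[of 0] by (simp add: m_def)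
  have Ny: "1 - (cmod y)\<^sup>2 = - m * (1 - a1) * (1 - a2)" using circle[of 1] by (simp add: m_def)
  have "2 * Re (1 - x * cnj y) = (1 - (cmod x)\<^sup>2) + (1 - (cmod y)\<^sup>2) + m"
    unfolding m_def cmod_power2 by (simp add: power2_eq_square algebra_simps)
  then have Rw: "Re (1 - x * cnj y) = m * (a1 + a2 - 2 * a1 * a2) / 2"
    unfolding Nx Ny by (simp add: algebra_simps)
  define A where "A = (1 - a1) * a2"
  define B where "B = - a1 * (a2 - 1)"
  have A: "A > 0" and B: "B > 0" unfolding A_def B_def using a by (auto intro: mult_pos_pos mult_neg_pos)
  have E: "A / B > 0" using A B by simp
  have "(cosh (hilbert_h x y / 2))\<^sup>2 = (cosh (ln (A / B)) + 1) / 2"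
    using cosh_double_cosh[of "ln (A / B) / 2"]
    by (simp add: hilbert_h_by_chord_params[OF False a circle] A_def B_def)
  also have "\<dots> = (A + B)\<^sup>2 / (4 * (A * B))"
    unfolding cosh_ln_real[OF E] using A B by (simp add: field_simps power2_eq_square)
  also have "\<dots> = (Re (1 - x * cnj y))\<^sup>2 / ((1 - (cmod x)\<^sup>2) * (1 - (cmod y)\<^sup>2))"
  proof -
    have sum: "A + B = a1 + a2 - 2 * a1 * a2"
      and prod: "A * B = a1 * a2 * ((1 - a1) * (1 - a2))"
      unfolding A_def B_def by (simp_all add: algebra_simps)
    have den: "(- m * a1 * a2) * (- m * (1 - a1) * (1 - a2)) = m\<^sup>2 * (a1 * a2 * ((1 - a1) * (1 - a2)))"
      by (simp add: power2_eq_square algebra_simps)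
    show ?thesis unfolding sum prod Rw Nx Ny den using m by (simp add: power_mult_distrib power_divide)
  qed
  finally show ?thesis .
qed

lemma one_minus_norm_sq_pos: "cmod z < 1 \<Longrightarrow> 0 < 1 - (cmod z)\<^sup>2"
  by (simp add: abs_square_less_1)

lemma hyp_rho_nonneg:
  assumes "cmod x < 1" "cmod y < 1"
  shows "0 \<le> hyp_rho x y"
proof -
  have "0 \<le> cmod (x - y) / sqrt ((1 - (cmod x)\<^sup>2) * (1 - (cmod y)\<^sup>2))"
    using one_minus_norm_sq_pos[OF assms(1)] one_minus_norm_sq_pos[OF assms(2)] by simp
  then show ?thesis unfolding hyp_rho_def
    using arsinh_real_neg_iff by (smt (verit))
qed

lemma cosh_half_hyp_rho_sq:
  assumes x: "cmod x < 1" and y: "cmod y < 1"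
  shows "(cosh (hyp_rho x y / 2))\<^sup>2
    = (cmod (1 - x * cnj y))\<^sup>2 / ((1 - (cmod x)\<^sup>2) * (1 - (cmod y)\<^sup>2))"
proof -
  define N where "N = (1 - (cmod x)\<^sup>2) * (1 - (cmod y)\<^sup>2)"
  have N: "N > 0" unfolding N_def using one_minus_norm_sq_pos[OF x] one_minus_norm_sq_pos[OF y] by simp
  have "(cosh (hyp_rho x y / 2))\<^sup>2 = 1 + (cmod (x - y))\<^sup>2 / N"
    unfolding hyp_rho_def N_def[symmetric] cosh_square_eq using N
    by (simp add: power_divide)
  also have "N + (cmod (x - y))\<^sup>2 = (cmod (1 - x * cnj y))\<^sup>2"
    unfolding N_def cmod_power2 by (simp add: power2_eq_square algebra_simps)
  then have "1 + (cmod (x - y))\<^sup>2 / N = (cmod (1 - x * cnj y))\<^sup>2 / N"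
    using N by (simp add: field_simps)
  finally show ?thesis unfolding N_def .
qed

lemma cosh_half_hyp_rho_sq_eq_hilbert_h:
  assumes x: "cmod x < 1" and y: "cmod y < 1"
  shows "(cosh (hyp_rho x y / 2))\<^sup>2 = (cosh (hilbert_h x y / 2))\<^sup>2
    + (Im (x * cnj y))\<^sup>2 / ((1 - (cmod x)\<^sup>2) * (1 - (cmod y)\<^sup>2))"
proof -
  have "(cmod (1 - x * cnj y))\<^sup>2 = (Re (1 - x * cnj y))\<^sup>2 + (Im (x * cnj y))\<^sup>2"
    unfolding cmod_power2 by (simp add: power2_eq_square algebra_simps)
  then show ?thesis
    unfolding cosh_half_hyp_rho_sq[OF x y] cosh_half_hilbert_h_sq[OF x y] by (simp add: add_divide_distrib)
qed

lemma cosh_half_hilbert_h_sq_eq_hyp_rho: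
  assumes x: "cmod x < 1" and y: "cmod y < 1"
  shows "(cosh (hilbert_h x y / 2))\<^sup>2 = (1 - (cmod x)\<^sup>2) * (cosh (hyp_rho x y / 2))\<^sup>2 + (cmod x)\<^sup>2
    + ((cmod x)\<^sup>2 - Re (x * cnj y))\<^sup>2 / ((1 - (cmod x)\<^sup>2) * (1 - (cmod y)\<^sup>2))"
proof -
  define N where "N = (1 - (cmod x)\<^sup>2) * (1 - (cmod y)\<^sup>2)"
  have N: "N > 0" unfolding N_def using one_minus_norm_sq_pos[OF x] one_minus_norm_sq_pos[OF y] by simp
  have "(1 - (cmod x)\<^sup>2) * (cmod (1 - x * cnj y))\<^sup>2 + (cmod x)\<^sup>2 * N
      + ((cmod x)\<^sup>2 - Re (x * cnj y))\<^sup>2 = (Re (1 - x * cnj y))\<^sup>2"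
    unfolding N_def cmod_power2 by (simp add: power2_eq_square algebra_simps)
  then show ?thesis
    unfolding cosh_half_hyp_rho_sq[OF x y] cosh_half_hilbert_h_sq[OF x y] N_def[symmetric]
    using N by (simp add: field_simps)
qed

lemma cosh_half_sq_less_iff:
  fixes a b :: real
  assumes "0 \<le> a" "0 \<le> b"
  shows "(cosh (a / 2))\<^sup>2 < (cosh (b / 2))\<^sup>2 \<longleftrightarrow> a < b"
proof -
  have "(cosh (a / 2))\<^sup>2 < (cosh (b / 2))\<^sup>2 \<longleftrightarrow> cosh (a / 2) < cosh (b / 2)"
    using cosh_real_pos[of "a / 2"] cosh_real_pos[of "b / 2"]
    by (meson less_le power2_less_imp_less power_strict_mono zero_less_numeral)
  also have "\<dots> \<longleftrightarrow> a < b" using assms by (simp add: cosh_real_nonneg_less_iff)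
  finally show ?thesis .
qed

lemma hilbert_h_le_hyp_rho:
  assumes x: "cmod x < 1" and y: "cmod y < 1"
  shows "hilbert_h x y \<le> hyp_rho x y"
proof -
  have "(cosh (hilbert_h x y / 2))\<^sup>2 \<le> (cosh (hyp_rho x y / 2))\<^sup>2"
    unfolding cosh_half_hyp_rho_sq_eq_hilbert_h[OF x y]
    using one_minus_norm_sq_pos[OF x] one_minus_norm_sq_pos[OF y] by simp
  then show ?thesis
    using cosh_half_sq_less_iff[OF hyp_rho_nonneg[OF x y] hilbert_h_nonneg[OF x y]] by linarith
qed

lemma hilbert_h_eq_hyp_rho:
  assumes x: "cmod x < 1" and y: "cmod y < 1" and "Im (x * cnj y) = 0"
  shows "hilbert_h x y = hyp_rho x y"
proof -
  have "(cosh (hilbert_h x y / 2))\<^sup>2 = (cosh (hyp_rho x y / 2))\<^sup>2"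
    unfolding cosh_half_hyp_rho_sq_eq_hilbert_h[OF x y] using assms(3) by simp
  then show ?thesis
    using cosh_half_sq_less_iff[OF hyp_rho_nonneg[OF x y] hilbert_h_nonneg[OF x y]]
      cosh_half_sq_less_iff[OF hilbert_h_nonneg[OF x y] hyp_rho_nonneg[OF x y]] by linarith
qed

lemma cosh_half_hyp_rho_sq_le_hilbert_h:
  assumes x: "cmod x < 1" and y: "cmod y < 1"
  shows "(1 - (cmod x)\<^sup>2) * (cosh (hyp_rho x y / 2))\<^sup>2 + (cmod x)\<^sup>2 \<le> (cosh (hilbert_h x y / 2))\<^sup>2"
  unfolding cosh_half_hilbert_h_sq_eq_hyp_rho[OF x y]
  using one_minus_norm_sq_pos[OF x] one_minus_norm_sq_pos[OF y] by simp

lemma ball_rho_subset_ball_h: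
  assumes "cmod x < 1"
  shows "ball_rho x s \<subseteq> ball_h x s"
  using hilbert_h_le_hyp_rho[OF assms] by (fastforce simp: ball_rho_def ball_h_def unit_disk_def)

lemma ball_h_subset_ball_rho:
  assumes x: "cmod x < 1" and "0 \<le> s" "0 \<le> t"
    and st: "(1 - (cmod x)\<^sup>2) * (cosh (s / 2))\<^sup>2 + (cmod x)\<^sup>2 = (cosh (t / 2))\<^sup>2"
  shows "ball_h x t \<subseteq> ball_rho x s"
proof
  fix y assume "y \<in> ball_h x t"
  then have y: "cmod y < 1" and h: "hilbert_h x y < t" by (auto simp: ball_h_def unit_disk_def)
  have "(cosh (hilbert_h x y / 2))\<^sup>2 < (cosh (t / 2))\<^sup>2"
    using h cosh_half_sq_less_iff[OF hilbert_h_nonneg[OF x y] \<open>0 \<le> t\<close>] by simp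
  then have "(1 - (cmod x)\<^sup>2) * (cosh (hyp_rho x y / 2))\<^sup>2 < (1 - (cmod x)\<^sup>2) * (cosh (s / 2))\<^sup>2"
    using cosh_half_hyp_rho_sq_le_hilbert_h[OF x y] st by linarith
  then have "(cosh (hyp_rho x y / 2))\<^sup>2 < (cosh (s / 2))\<^sup>2"
    using one_minus_norm_sq_pos[OF x] by simp
  then have "hyp_rho x y < s" using cosh_half_sq_less_iff[OF hyp_rho_nonneg[OF x y] \<open>0 \<le> s\<close>] by simp
  then show "y \<in> ball_rho x s" using y by (simp add: ball_rho_def unit_disk_def)
qed

lemma hyp_rho_eqI:
  assumes "cmod (x - y) / sqrt ((1 - (cmod x)\<^sup>2) * (1 - (cmod y)\<^sup>2)) = sinh (s / 2)"
  shows "hyp_rho x y = s"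
  unfolding hyp_rho_def assms arsinh_sinh_real by simp

lemma exists_real_point_at_hyp_rho:
  fixes p s :: real
  assumes p: "\<bar>p\<bar> < 1" and s: "0 \<le> s"
  obtains y where "cmod y < 1" "Im y = 0" "hyp_rho (of_real p) y = s"
proof -
  define q where "q = 1 - p\<^sup>2"
  define \<tau> where "\<tau> = tanh (s / 2)"
  have q: "q > 0" unfolding q_def using p by (simp add: abs_square_less_1)
  have \<tau>: "0 \<le> \<tau>" "\<tau> < 1" unfolding \<tau>_def using s by (simp_all add: tanh_real_lt_1)
  have "1 - \<tau>\<^sup>2 = ((cosh (s / 2))\<^sup>2 - (sinh (s / 2))\<^sup>2) / (cosh (s / 2))\<^sup>2"
    unfolding \<tau>_def tanh_def using cosh_real_pos[of "s / 2"] by (simp add: power_divide diff_divide_distrib)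
  then have \<tau>_cosh: "1 - \<tau>\<^sup>2 = 1 / (cosh (s / 2))\<^sup>2" by (simp add: cosh_square_eq)
  have "\<bar>p * \<tau>\<bar> \<le> \<bar>p\<bar>" using \<tau> by (simp add: abs_mult mult_left_le)
  then have pt: "1 + p * \<tau> > 0" using p by linarith
  \<comment> \<open>the image of \<tau> under the disk automorphism of the real axis taking 0 to p\<close>
  define X where "X = (p + \<tau>) / (1 + p * \<tau>)"
  have one_minus_X: "1 - X\<^sup>2 = q * (1 - \<tau>\<^sup>2) / (1 + p * \<tau>)\<^sup>2"
  proof -
    have "1 - X\<^sup>2 = ((1 + p * \<tau>)\<^sup>2 - (p + \<tau>)\<^sup>2) / (1 + p * \<tau>)\<^sup>2"
      unfolding X_def power_divide using pt by (simp add: diff_divide_distrib)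
    also have "(1 + p * \<tau>)\<^sup>2 - (p + \<tau>)\<^sup>2 = q * (1 - \<tau>\<^sup>2)"
      unfolding q_def by (simp add: power2_eq_square algebra_simps)
    finally show ?thesis .
  qed
  have X: "\<bar>X\<bar> < 1"
  proof -
    have "1 - X\<^sup>2 > 0" unfolding one_minus_X using q pt \<tau> by (simp add: abs_square_less_1)
    then show ?thesis by (simp add: abs_square_less_1)
  qed
  have "cmod (of_real p - of_real X) = q * \<tau> / (1 + p * \<tau>)"
  proof -
    have "p - X = - (q * \<tau> / (1 + p * \<tau>))"
      unfolding X_def q_def using pt by (simp add: field_simps power2_eq_square)
    moreover have "cmod (of_real p - of_real X) = \<bar>p - X\<bar>" by (simp flip: of_real_diff)
    ultimately show ?thesis using q pt \<tau> by simp
  qed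
  moreover have "sqrt ((1 - p\<^sup>2) * (1 - X\<^sup>2)) = q * sqrt (1 - \<tau>\<^sup>2) / (1 + p * \<tau>)"
    unfolding one_minus_X q_def[symmetric] using q pt
    by (simp add: real_sqrt_mult real_sqrt_divide power2_eq_square)
  moreover have "\<tau> / sqrt (1 - \<tau>\<^sup>2) = sinh (s / 2)"
    unfolding \<tau>_cosh using cosh_real_pos[of "s / 2"] by (simp add: \<tau>_def tanh_def real_sqrt_divide)
  ultimately have "hyp_rho (of_real p) (of_real X) = s"
    using q pt by (intro hyp_rho_eqI) simp
  then show thesis using that[of "of_real X"] X by simp
qed

lemma exists_point_above_at_hyp_rho:
  fixes p s :: real
  assumes p: "\<bar>p\<bar> < 1" and s: "0 \<le> s"
  obtains y where "cmod y < 1" "Re y = p" "hyp_rho (of_real p) y = s"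
proof -
  define q where "q = 1 - p\<^sup>2"
  define \<sigma> where "\<sigma> = sinh (s / 2)"
  define k where "k = 1 + \<sigma>\<^sup>2 * q"
  \<comment> \<open>the nonnegative solution of Y / sqrt (q * (q - Y^2)) = \<sigma>\<close>
  define Y where "Y = \<sigma> * q / sqrt k"
  define y where "y = Complex p Y"
  have q: "q > 0" unfolding q_def using p by (simp add: abs_square_less_1)
  have \<sigma>: "\<sigma> \<ge> 0" unfolding \<sigma>_def using s by simp
  have k: "k > 0" unfolding k_def using q by (simp add: add_pos_nonneg)
  have Y: "Y \<ge> 0" unfolding Y_def using \<sigma> q k by simp
  have "1 - (cmod y)\<^sup>2 = q - Y\<^sup>2" unfolding y_def q_def cmod_power2 by simp
  also have "\<dots> = q / k" unfolding Y_def using q k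
    by (simp add: power_divide power_mult_distrib field_simps k_def power2_eq_square)
  finally have one_minus_y: "1 - (cmod y)\<^sup>2 = q / k" .
  then have "(cmod y)\<^sup>2 < 1" using divide_pos_pos[OF q k] by linarith
  then have y: "cmod y < 1" by (simp add: abs_square_less_1)
  have "cmod (of_real p - y) = Y" unfolding y_def using Y by (simp add: cmod_def)
  moreover have "sqrt ((1 - p\<^sup>2) * (1 - (cmod y)\<^sup>2)) = q / sqrt k"
    unfolding one_minus_y q_def[symmetric] using q k by (simp add: real_sqrt_divide real_sqrt_mult)
  ultimately have "hyp_rho (of_real p) y = s"
    using q k by (intro hyp_rho_eqI) (simp add: Y_def \<sigma>_def)
  then show thesis using that y by (simp add: y_def)
qed

lemma ball_rho_not_subset_ball_h:
  fixes p t s :: real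
  assumes p: "\<bar>p\<bar> < 1" and "0 \<le> t" "t < s"
  shows "\<not> ball_rho (of_real p) s \<subseteq> ball_h (of_real p) t"
proof -
  obtain y where y: "cmod y < 1" "Im y = 0" and rho: "hyp_rho (of_real p) y = t"
    using exists_real_point_at_hyp_rho[OF p \<open>0 \<le> t\<close>] by blast
  have "hilbert_h (of_real p) y = t"
    using hilbert_h_eq_hyp_rho[of "of_real p" y] p y rho by simp
  then have "y \<in> ball_rho (of_real p) s - ball_h (of_real p) t"
    using y rho \<open>t < s\<close> by (simp add: ball_rho_def ball_h_def unit_disk_def)
  then show ?thesis by blast
qed

lemma ball_h_not_subset_ball_rho:
  fixes p s s' t :: real
  assumes p: "\<bar>p\<bar> < 1" and "0 \<le> s'" "s' < s" "0 \<le> t"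
    and st: "(1 - p\<^sup>2) * (cosh (s / 2))\<^sup>2 + p\<^sup>2 = (cosh (t / 2))\<^sup>2"
  shows "\<not> ball_h (of_real p) t \<subseteq> ball_rho (of_real p) s'"
proof -
  obtain y where y: "cmod y < 1" "Re y = p" and rho: "hyp_rho (of_real p) y = s'"
    using exists_point_above_at_hyp_rho[OF p \<open>0 \<le> s'\<close>] by blast
  have x: "cmod (of_real p) < 1" using p by simp
  have "(cosh (hilbert_h (of_real p) y / 2))\<^sup>2 = (1 - p\<^sup>2) * (cosh (s' / 2))\<^sup>2 + p\<^sup>2"
    using cosh_half_hilbert_h_sq_eq_hyp_rho[OF x y(1)] rho y(2) by (simp add: power2_eq_square)
  also have "\<dots> < (cosh (t / 2))\<^sup>2"
  proof -
    have "(cosh (s' / 2))\<^sup>2 < (cosh (s / 2))\<^sup>2"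
      using cosh_half_sq_less_iff[of s' s] \<open>0 \<le> s'\<close> \<open>s' < s\<close> by simp
    moreover have "1 - p\<^sup>2 > 0" using p by (simp add: abs_square_less_1)
    ultimately show ?thesis unfolding st[symmetric] by simp
  qed
  finally have "hilbert_h (of_real p) y < t"
    using cosh_half_sq_less_iff[OF hilbert_h_nonneg[OF x y(1)] \<open>0 \<le> t\<close>] by simp
  then have "y \<in> ball_h (of_real p) t - ball_rho (of_real p) s'"
    using y rho by (simp add: ball_rho_def ball_h_def unit_disk_def)
  then show ?thesis by blast
qed

lemma exists_pos_cosh_half_sq:
  fixes M :: real
  assumes "1 < M"
  obtains s where "0 < s" "(cosh (s / 2))\<^sup>2 = M"
proof -
  have M: "1 < sqrt M" using assms by simp
  have "0 < 2 * arcosh (sqrt M)" using M by simp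
  moreover have "(cosh (2 * arcosh (sqrt M) / 2))\<^sup>2 = M" using M assms by simp
  ultimately show thesis using that by blast
qed

lemma tanh_half_radius:
  fixes z t s :: real
  assumes z: "z\<^sup>2 < 1" and t: "0 < t" and s: "0 \<le> s"
    and st: "(1 - z\<^sup>2) * (cosh (s / 2))\<^sup>2 + z\<^sup>2 = (cosh (t / 2))\<^sup>2"
  shows "tanh (s / 2) = (exp t - 1) / sqrt ((exp t + 1)\<^sup>2 - 4 * exp t * z\<^sup>2)"
proof -
  define r where "r = exp t"
  define C where "C = (cosh (t / 2))\<^sup>2"
  define Q where "Q = (r + 1)\<^sup>2 - 4 * r * z\<^sup>2"
  have r: "1 < r" unfolding r_def using t by simp
  have C: "C = (r + 1)\<^sup>2 / (4 * r)"
  proof -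
    have "C = (cosh t + 1) / 2" unfolding C_def using cosh_double_cosh[of "t / 2"] by simp
    also have "cosh t = (r + inverse r) / 2" unfolding cosh_field_def r_def by (simp add: exp_minus)
    finally show ?thesis using r by (simp add: field_simps power2_eq_square)
  qed
  have "4 * r * z\<^sup>2 < 4 * r" using z r by simp
  moreover have "4 * r \<le> (r + 1)\<^sup>2" using zero_le_power2[of "r - 1"] by (simp add: power2_eq_square algebra_simps)
  ultimately have Q: "0 < Q" unfolding Q_def by linarith
  define c where "c = (cosh (s / 2))\<^sup>2"
  have c: "0 < c" unfolding c_def using cosh_real_pos[of "s / 2"] by simp
  have "(tanh (s / 2))\<^sup>2 = (c - 1) / c"
    unfolding tanh_def c_def power_divide using cosh_square_eq[of "s / 2"] by simp
  also have "\<dots> = (C - 1) / (C - z\<^sup>2)"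
  proof -
    have "C - 1 = (c - 1) * (1 - z\<^sup>2)" "C - z\<^sup>2 = c * (1 - z\<^sup>2)"
      using st unfolding c_def C_def by (simp_all add: algebra_simps)
    then show ?thesis using z by simp
  qed
  also have "\<dots> = (r - 1)\<^sup>2 / Q"
  proof -
    have "C - 1 = (r - 1)\<^sup>2 / (4 * r)" "C - z\<^sup>2 = Q / (4 * r)"
      unfolding C Q_def using r by (simp_all add: field_simps power2_eq_square)
    then show ?thesis using r by simp
  qed
  finally have "(tanh (s / 2))\<^sup>2 = (r - 1)\<^sup>2 / Q" .
  then have "tanh (s / 2) = sqrt ((r - 1)\<^sup>2 / Q)" using s by (simp add: real_sqrt_unique)
  then show ?thesis using r Q by (simp add: real_sqrt_divide Q_def r_def)
qed

theorem mainTheorem9: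
  fixes z0 t r :: real
  assumes "0 < z0" and "z0 < 1" and "0 < t" and "r = exp t"
  shows "is_greatest {s. 0 < s \<and> ball_rho (complex_of_real z0) s \<subseteq> ball_h (complex_of_real z0) t} t
    \<and> (\<exists>s. tanh (s / 2) = (r - 1) / sqrt ((r + 1)\<^sup>2 - 4 * r * z0\<^sup>2)
           \<and> is_least {s. 0 < s \<and> ball_h (complex_of_real z0) t \<subseteq> ball_rho (complex_of_real z0) s} s)"
proof -
  have z: "\<bar>z0\<bar> < 1" and x: "cmod (complex_of_real z0) < 1" using assms(1,2) by auto
  have z2: "z0\<^sup>2 < 1" using z by (simp add: abs_square_less_1)
  have "1 < (cosh (t / 2))\<^sup>2" using cosh_half_sq_less_iff[of 0 t] assms(3) by simp
  then have "1 < ((cosh (t / 2))\<^sup>2 - z0\<^sup>2) / (1 - z0\<^sup>2)" using z2 by simp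
  then obtain s where s: "0 < s" and "(cosh (s / 2))\<^sup>2 = ((cosh (t / 2))\<^sup>2 - z0\<^sup>2) / (1 - z0\<^sup>2)"
    by (rule exists_pos_cosh_half_sq)
  then have st: "(1 - z0\<^sup>2) * (cosh (s / 2))\<^sup>2 + z0\<^sup>2 = (cosh (t / 2))\<^sup>2" using z2 by simp
  have "is_greatest {s. 0 < s \<and> ball_rho (complex_of_real z0) s \<subseteq> ball_h (complex_of_real z0) t} t"
    unfolding is_greatest_def using ball_rho_subset_ball_h[OF x] ball_rho_not_subset_ball_h[OF z] assms(3)
    by auto (meson less_imp_le not_le)
  moreover have "ball_h (complex_of_real z0) t \<subseteq> ball_rho (complex_of_real z0) s"
    using ball_h_subset_ball_rho[OF x, of s t] s assms(3) st by simp
  then have "is_least {s. 0 < s \<and> ball_h (complex_of_real z0) t \<subseteq> ball_rho (complex_of_real z0) s} s"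
    unfolding is_least_def using ball_h_not_subset_ball_rho[OF z _ _ _ st] s assms(3)
    by auto (meson less_imp_le not_le)
  moreover have "tanh (s / 2) = (r - 1) / sqrt ((r + 1)\<^sup>2 - 4 * r * z0\<^sup>2)"
    using tanh_half_radius[OF z2 assms(3) _ st] s assms(4) by simp
  ultimately show ?thesis by blast
qed

end
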